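(* Let $(\mathcal U,\mathcal D)$ be a metric space, $\mathcal R\subseteq\mathcal U$ a finite dataset, $\delta>0$, and $a_1,\dots,a_n\in\mathcal U$. For $o\in\mathcal U$ let $o^n=(\mathcal D(a_1,o),\dots,\mathcal D(a_n,o))\in\mathbb{R}^n$. Let $\mathcal B_1,\dots,\mathcal B_p\subseteq\mathbb{R}^n$ be boxes $\mathcal B_i=\prod_{d=1}^n[\mathcal B_i^{\bot}[d],\mathcal B_i^{\top}[d]]$, and define the kernel partitions $\mathcal V_i=\{o\in\mathcal R: o^n\in\mathcal B_i\}$ and the whole partitions $$\mathcal W_i=\Big\{o\in\mathcal R:\ o^n\in\prod_{d=1}^n\big[\mathcal B_i^{\bot}[d]-\delta,\ \mathcal B_i^{\top}[d]+\delta\big]\Big\}.$$ Assume the kernel partitions are pairwise disjoint and $\bigcup_{i=1}^p\mathcal V_i=\mathcal R$. Then for any two objects $o_x,o_y\in\mathcal R$ with $\mathcal D(o_x,o_y)<\delta$, there exists $k\in\{1,\dots,p\}$ such that $o_x\in\mathcal V_k$ and $o_y\in\mathcal W_k$.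
   Context: The points $a_1,\dots,a_n$ are "dimensional pivots" used to map objects into the Euclidean target space $\mathbb{R}^n$; the boxes $\mathcal B_i$ are the areas obtained by partitioning that target space. A metric $\mathcal D$ satisfies non-negativity, $\mathcal D(x,y)=0$ iff $x=y$, symmetry and the triangle inequality. *)

theory Defs
  imports "HOL-Analysis.Analysis"
begin

definition is_metric :: "'u set \<Rightarrow> ('u \<Rightarrow> 'u \<Rightarrow> real) \<Rightarrow> bool" where
  "is_metric U D \<longleftrightarrow>
     (\<forall>x\<in>U. \<forall>y\<in>U. D x y \<ge> 0) \<and>
     (\<forall>x\<in>U. \<forall>y\<in>U. D x y = 0 \<longleftrightarrow> x = y) \<and>
     (\<forall>x\<in>U. \<forall>y\<in>U. D x y = D y x) \<and>
     (\<forall>x\<in>U. \<forall>y\<in>U. \<forall>z\<in>U. D x z \<le> D x y + D y z)"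

definition kernel_part ::
  "('u \<Rightarrow> 'u \<Rightarrow> real) \<Rightarrow> (nat \<Rightarrow> 'u) \<Rightarrow> nat \<Rightarrow> 'u set \<Rightarrow>
   (nat \<Rightarrow> nat \<Rightarrow> real) \<Rightarrow> (nat \<Rightarrow> nat \<Rightarrow> real) \<Rightarrow> nat \<Rightarrow> 'u set" where
  "kernel_part D a n R lo hi i =
     {x \<in> R. \<forall>d\<in>{1..n}. lo i d \<le> D (a d) x \<and> D (a d) x \<le> hi i d}"

definition whole_part ::
  "('u \<Rightarrow> 'u \<Rightarrow> real) \<Rightarrow> (nat \<Rightarrow> 'u) \<Rightarrow> nat \<Rightarrow> 'u set \<Rightarrow>
   (nat \<Rightarrow> nat \<Rightarrow> real) \<Rightarrow> (nat \<Rightarrow> nat \<Rightarrow> real) \<Rightarrow> real \<Rightarrow> nat \<Rightarrow> 'u set" where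
  "whole_part D a n R lo hi \<delta> i =
     {x \<in> R. \<forall>d\<in>{1..n}. lo i d - \<delta> \<le> D (a d) x \<and> D (a d) x \<le> hi i d + \<delta>}"

end

theory Submission
  imports Defs
begin

text \<open>The pivot map \<open>o \<mapsto> (D(a\<^sub>1,o),\<dots>,D(a\<^sub>n,o))\<close> is 1-Lipschitz in every coordinate by the
  triangle inequality, so an object within \<open>\<delta>\<close> of a point of a box lies in the box widened
  by \<open>\<delta>\<close>. Hence any box of the covering kernel partitions that contains \<open>o\<^sub>x\<close> works.\<close>

lemma is_metric_dist_diff_le:
  assumes "is_metric U D" and "z \<in> U" "x \<in> U" "y \<in> U"
  shows "\<bar>D z x - D z y\<bar> \<le> D x y"
proof -
  have sym: "\<forall>x\<in>U. \<forall>y\<in>U. D x y = D y x"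
    and tri: "\<forall>x\<in>U. \<forall>y\<in>U. \<forall>z\<in>U. D x z \<le> D x y + D y z"
    using assms(1) unfolding is_metric_def by blast+
  have "D z x \<le> D z y + D y x" "D z y \<le> D z x + D x y"
    using tri assms(2-4) by blast+
  moreover have "D y x = D x y" using sym assms(3,4) by blast
  ultimately show ?thesis by linarith
qed

lemma whole_part_if_kernel_part_close:
  assumes "is_metric U D" and "R \<subseteq> U" and "\<forall>d\<in>{1..n}. a d \<in> U"
    and "x \<in> kernel_part D a n R lo hi k" and "y \<in> R" and "D x y \<le> \<delta>"
  shows "y \<in> whole_part D a n R lo hi \<delta> k"
proof -
  have "lo k d - \<delta> \<le> D (a d) y \<and> D (a d) y \<le> hi k d + \<delta>" if d: "d \<in> {1..n}" for d
  proof -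
    have "x \<in> R" "lo k d \<le> D (a d) x" "D (a d) x \<le> hi k d"
      using assms(4) d unfolding kernel_part_def by auto
    moreover have "\<bar>D (a d) x - D (a d) y\<bar> \<le> D x y"
      using is_metric_dist_diff_le[OF assms(1)] assms(2,3,5) d \<open>x \<in> R\<close> by blast
    ultimately show ?thesis using assms(6) by linarith
  qed
  then show ?thesis using assms(5) unfolding whole_part_def by blast
qed

theorem lemma4:
  fixes U :: "'u set" and D :: "'u \<Rightarrow> 'u \<Rightarrow> real" and R :: "'u set"
    and \<delta> :: real and n p :: nat and a :: "nat \<Rightarrow> 'u"
    and lo hi :: "nat \<Rightarrow> nat \<Rightarrow> real" and ox oy :: 'u
  assumes "is_metric U D"
    and "R \<subseteq> U" and "finite R"
    and "\<delta> > 0"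
    and "\<forall>d\<in>{1..n}. a d \<in> U"
    and "\<forall>i\<in>{1..p}. \<forall>j\<in>{1..p}. i \<noteq> j \<longrightarrow>
           kernel_part D a n R lo hi i \<inter> kernel_part D a n R lo hi j = {}"
    and "(\<Union>i\<in>{1..p}. kernel_part D a n R lo hi i) = R"
    and "ox \<in> R" and "oy \<in> R" and "D ox oy < \<delta>"
  shows "\<exists>k\<in>{1..p}. ox \<in> kernel_part D a n R lo hi k \<and> oy \<in> whole_part D a n R lo hi \<delta> k"
proof -
  obtain k where "k \<in> {1..p}" and ox_k: "ox \<in> kernel_part D a n R lo hi k"
    using assms(7,8) by blast
  moreover have "oy \<in> whole_part D a n R lo hi \<delta> k"
    using whole_part_if_kernel_part_close[OF assms(1,2,5) ox_k assms(9)] assms(10) by simp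
  ultimately show ?thesis by blast
qed

end
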